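(* Let $(E,\|\cdot\|)$ be a real Banach space and $\mathcal{C}\subset E$ a closed convex cone with $\mathbb{R}_+\mathcal{C}=\mathcal{C}$ and $\mathcal{C}\cap(-\mathcal{C})=\{0\}$. Assume: (H1) there are $\ell\in E'$ with $\|\ell\|=1$ and $K\in[1,\infty)$ with $\langle\ell,\phi\rangle\ge\frac1K\|\phi\|$ for all $\phi\in\mathcal{C}$; (H2) $\rho\in(0,1]$ is fixed such that $\mathcal{C}(\rho)=\{\phi\in\mathcal{C}:B(\phi,\rho\|\phi\|)\subset\mathcal{C}\}$ contains a nonzero element. Set $\mathcal{C}_{\ell=1}(\rho)=\{\phi\in\mathcal{C}(\rho):\langle\ell,\phi\rangle=1\}$. Let $\mathcal{M}\subset L(E)$ be a collection of operators such that, for some $1\le\vartheta<\infty$ and every $L\in\mathcal{M}$: (H3) $L(\mathcal{C}\setminus\{0\})\subset\mathcal{C}(\rho)\setminus\{0\}$, and (H4) $\frac1\vartheta\le\|L\|\le\vartheta$. Let $(\Omega,\mathcal{F},\mathbb{P})$ be a probability space with an invertible, measure-preserving, ergodic map $\tau$. Let $X=L^\infty(\Omega,E)$ be the Banach space of uniformly bounded Bochner measurable maps $\boldsymbol{\phi}=(\phi_\omega)_{\omega\in\Omega}:\Omega\to E$ with norm $\sup_\omega\|\phi_\omega\|$. Let $(\mathcal{L}_\omega)_{\omega\in\Omega}$ be a family with values in $\mathcal{M}$ such that $\mathbf{L}:X\to X$, $(\mathbf{L}\boldsymbol{\phi})_\omega=\mathcal{L}_{\tau^{-1}\omega}\phi_{\tau^{-1}\omega}$,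 is well defined (i.e. preserves Bochner measurability of sections). For $\boldsymbol{\phi}\in X$ with $\phi_\omega\in\mathcal{C}\setminus\{0\}$ for all $\omega$, define \[(\boldsymbol{\pi}(\boldsymbol{\phi}))_\omega=\frac{\mathcal{L}_{\tau^{-1}\omega}\phi_{\tau^{-1}\omega}}{\langle\ell,\mathcal{L}_{\tau^{-1}\omega}\phi_{\tau^{-1}\omega}\rangle}.\] Then $\boldsymbol{\pi}$ admits a unique fixed point section $\mathbf{f}=\boldsymbol{\pi}(\mathbf{f})\in X$ with $f_\omega\in\mathcal{C}_{\ell=1}(\rho)$ for all $\omega\in\Omega$.
   Context: A map $\Omega\to E$ is Bochner measurable if it is a uniform limit of $\mathcal{F}$-measurable maps with countable image. *)

theory Defs
  imports "HOL-Probability.Probability"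
begin

definition meas_preserving :: "'w measure \<Rightarrow> ('w \<Rightarrow> 'w) \<Rightarrow> bool" where
  "meas_preserving P T \<longleftrightarrow> T \<in> measurable P P \<and>
     (\<forall>A \<in> sets P. emeasure P (T -` A \<inter> space P) = emeasure P A)"

definition ergodic_map :: "'w measure \<Rightarrow> ('w \<Rightarrow> 'w) \<Rightarrow> bool" where
  "ergodic_map P T \<longleftrightarrow> (\<forall>A \<in> sets P. T -` A \<inter> space P = A \<longrightarrow>
       emeasure P A = 0 \<or> emeasure P A = 1)"

definition countably_valued_meas :: "'w measure \<Rightarrow> ('w \<Rightarrow> 'e) \<Rightarrow> bool" where
  "countably_valued_meas P g \<longleftrightarrow> countable (g ` space P) \<and>
     (\<forall>y. g -` {y} \<inter> space P \<in> sets P)"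

definition bochner_meas :: "'w measure \<Rightarrow> ('w \<Rightarrow> 'e::metric_space) \<Rightarrow> bool" where
  "bochner_meas P f \<longleftrightarrow> (\<exists>g :: nat \<Rightarrow> 'w \<Rightarrow> 'e. (\<forall>n. countably_valued_meas P (g n)) \<and>
     (\<forall>e>0. \<exists>N. \<forall>n\<ge>N. \<forall>\<omega>\<in>space P. dist (g n \<omega>) (f \<omega>) < e))"

definition Linf_sections :: "'w measure \<Rightarrow> ('w \<Rightarrow> 'e::real_normed_vector) set" where
  "Linf_sections P = {f. bochner_meas P f \<and> (\<exists>B. \<forall>\<omega>\<in>space P. norm (f \<omega>) \<le> B)}"

definition cone_rho :: "'e::real_normed_vector set \<Rightarrow> real \<Rightarrow> 'e set" where
  "cone_rho C \<rho> = {\<phi> \<in> C. ball \<phi> (\<rho> * norm \<phi>) \<subseteq> C}"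

definition cone_rho_l1 :: "'e::real_normed_vector set \<Rightarrow> real \<Rightarrow> ('e \<Rightarrow> real) \<Rightarrow> 'e set" where
  "cone_rho_l1 C \<rho> ell = {\<phi> \<in> cone_rho C \<rho>. ell \<phi> = 1}"

definition proj_op :: "('w \<Rightarrow> 'e \<Rightarrow> 'e) \<Rightarrow> ('w \<Rightarrow> 'w) \<Rightarrow> ('e \<Rightarrow> real) \<Rightarrow> ('w \<Rightarrow> 'e) \<Rightarrow> 'w \<Rightarrow> 'e::real_normed_vector" where
  "proj_op Lf \<tau>i ell \<phi> \<omega> = (1 / ell (Lf (\<tau>i \<omega>) (\<phi> (\<tau>i \<omega>)))) *\<^sub>R Lf (\<tau>i \<omega>) (\<phi> (\<tau>i \<omega>))"

end

theory Submission
  imports Defs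
begin

(* Birkhoff's contraction argument, carried out fibrewise. Write a v <= u <= b v for the order
   defined by C. An operator L that maps C - {0} into C(rho) - {0} sends the gaps u - a v and
   b v - u into C(rho), which lets both a and b be improved by the fraction gamma = rho / (2 K) of
   the gap b - a; hence b/a - 1 shrinks by the factor 1 - gamma, uniformly in omega. For vectors
   normalised by ell, the ratio b/a controls their distance, so the iterates pi^n of any section
   with values in C_{ell=1}(rho) form a uniformly Cauchy sequence whose limit is a fixed section,
   and two fixed sections are within O((1 - gamma)^n) of each other for every n.
   Bochner measurability passes to the limit because the bounds on the operator norms keep the
   vectors L phi away from ker ell and bounded, where normalisation is Lipschitz, and because
   uniform limits of Bochner measurable maps are Bochner measurable. *)

section \<open>Bochner measurable maps\<close>

lemma bochner_meas_iff_uniform_limit: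
  "bochner_meas P f \<longleftrightarrow>
     (\<exists>g. (\<forall>n. countably_valued_meas P (g n)) \<and> uniform_limit (space P) g f sequentially)"
  unfolding bochner_meas_def uniform_limit_sequentially_iff ..

lemma bochner_meas_const: "bochner_meas P (\<lambda>\<omega>. c)"
proof -
  have "countable ((\<lambda>\<omega>. c) ` space P)"
    by (rule countable_subset[of _ "{c}"]) auto
  moreover have "(\<lambda>\<omega>. c) -` {y} \<inter> space P \<in> sets P" for y
    by (cases "y = c") auto
  ultimately have "countably_valued_meas P (\<lambda>\<omega>. c)"
    unfolding countably_valued_meas_def by blast
  then show ?thesis
    unfolding bochner_meas_iff_uniform_limit
    by (intro exI[of _ "\<lambda>_ _. c"]) (simp add: uniform_limit_const)
qed

lemma bochner_meas_uniform_limit: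
  fixes f :: "nat \<Rightarrow> 'w \<Rightarrow> 'e::metric_space"
  assumes f: "\<And>k. bochner_meas P (f k)" and lim: "uniform_limit (space P) f g sequentially"
  shows "bochner_meas P g"
proof -
  have "\<exists>h. countably_valued_meas P h \<and> (\<forall>\<omega>\<in>space P. dist (h \<omega>) (f k \<omega>) < 1 / Suc k)" for k
  proof -
    obtain H where "\<And>n. countably_valued_meas P (H n)" "uniform_limit (space P) H (f k) sequentially"
      using f[of k] unfolding bochner_meas_iff_uniform_limit by blast
    moreover have "(1::real) / Suc k > 0" by simp
    ultimately show ?thesis
      unfolding uniform_limit_sequentially_iff by blast
  qed
  then obtain h where h_cv: "\<And>k. countably_valued_meas P (h k)"
    and h_close: "\<And>k \<omega>. \<omega> \<in> space P \<Longrightarrow> dist (h k \<omega>) (f k \<omega>) < 1 / Suc k"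
    by metis
  have "uniform_limit (space P) h g sequentially"
    unfolding uniform_limit_sequentially_iff
  proof (intro allI impI)
    fix e :: real assume "e > 0"
    then obtain N1 where N1: "\<forall>k\<ge>N1. \<forall>\<omega>\<in>space P. dist (f k \<omega>) (g \<omega>) < e/2"
      using lim unfolding uniform_limit_sequentially_iff by (meson half_gt_zero)
    obtain N2 where N2: "1 / Suc N2 < e/2"
      using \<open>e > 0\<close> by (meson half_gt_zero nat_approx_posE)
    have "dist (h k \<omega>) (g \<omega>) < e" if "k \<ge> max N1 N2" "\<omega> \<in> space P" for k \<omega>
    proof -
      have "1 / real (Suc k) \<le> 1 / Suc N2"
        using that(1) by (intro divide_left_mono) auto
      then have "dist (h k \<omega>) (f k \<omega>) < e/2"
        using h_close[OF that(2), of k] N2 by linarith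
      moreover have "dist (f k \<omega>) (g \<omega>) < e/2"
        using N1 that by simp
      ultimately show ?thesis
        using dist_triangle[of "h k \<omega>" "g \<omega>" "f k \<omega>"] by linarith
    qed
    then show "\<exists>N. \<forall>k\<ge>N. \<forall>\<omega>\<in>space P. dist (h k \<omega>) (g \<omega>) < e"
      by blast
  qed
  then show ?thesis
    unfolding bochner_meas_iff_uniform_limit using h_cv by blast
qed

lemma countably_valued_meas_comp:
  assumes "countably_valued_meas P h"
  shows "countably_valued_meas P (\<lambda>\<omega>. \<phi> (h \<omega>))"
proof -
  have cnt: "countable (h ` space P)" and fibres: "\<And>y. h -` {y} \<inter> space P \<in> sets P"
    using assms unfolding countably_valued_meas_def by blast+
  have "(\<lambda>\<omega>. \<phi> (h \<omega>)) ` space P = \<phi> ` h ` space P"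
    by auto
  then have "countable ((\<lambda>\<omega>. \<phi> (h \<omega>)) ` space P)"
    using cnt by simp
  moreover have "(\<lambda>\<omega>. \<phi> (h \<omega>)) -` {z} \<inter> space P =
      (\<Union>y\<in>{y \<in> h ` space P. \<phi> y = z}. h -` {y} \<inter> space P)" for z
    by auto
  moreover have "(\<Union>y\<in>{y \<in> h ` space P. \<phi> y = z}. h -` {y} \<inter> space P) \<in> sets P" for z
    using cnt fibres by (intro sets.countable_UN'') (simp_all add: countable_subset[of _ "h ` space P"])
  ultimately show ?thesis
    unfolding countably_valued_meas_def by simp
qed

lemma bochner_meas_compose_uniformly_continuous:
  fixes g :: "'w \<Rightarrow> 'a::metric_space" and F :: "'a \<Rightarrow> 'b::metric_space"
  assumes g: "bochner_meas P g" and g_S: "\<And>\<omega>. \<omega> \<in> space P \<Longrightarrow> g \<omega> \<in> S"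
    and F: "uniformly_continuous_on S F"
  shows "bochner_meas P (\<lambda>\<omega>. F (g \<omega>))"
proof -
  obtain h where h_cv: "\<And>n. countably_valued_meas P (h n)"
    and h_lim: "uniform_limit (space P) h g sequentially"
    using g unfolding bochner_meas_iff_uniform_limit by blast
  \<comment> \<open>The values of h n need not lie in S, so F is applied to g at a point of the same
    fibre of h n.\<close>
  define pick where "pick n y = (SOME \<omega>. \<omega> \<in> space P \<and> h n \<omega> = y)" for n y
  define h' where "h' n = (\<lambda>\<omega>. F (g (pick n (h n \<omega>))))" for n
  have pick: "pick n (h n \<omega>) \<in> space P \<and> h n (pick n (h n \<omega>)) = h n \<omega>"
    if "\<omega> \<in> space P" for n \<omega>
    unfolding pick_def by (rule someI[where x = \<omega>]) (simp add: that)
  have "countably_valued_meas P (h' n)" for n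
    unfolding h'_def using h_cv[of n] by (rule countably_valued_meas_comp)
  moreover have "uniform_limit (space P) h' (\<lambda>\<omega>. F (g \<omega>)) sequentially"
    unfolding uniform_limit_sequentially_iff
  proof (intro allI impI)
    fix e :: real assume "e > 0"
    then obtain d where "d > 0"
      and d: "\<And>x x'. x \<in> S \<Longrightarrow> x' \<in> S \<Longrightarrow> dist x' x < d \<Longrightarrow> dist (F x') (F x) < e"
      using F unfolding uniformly_continuous_on_def by metis
    then obtain N where N: "\<forall>n\<ge>N. \<forall>\<omega>\<in>space P. dist (h n \<omega>) (g \<omega>) < d/2"
      using h_lim unfolding uniform_limit_sequentially_iff by (meson half_gt_zero)
    have "dist (h' n \<omega>) (F (g \<omega>)) < e" if "n \<ge> N" "\<omega> \<in> space P" for n \<omega>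
    proof -
      define \<omega>' where "\<omega>' = pick n (h n \<omega>)"
      have \<omega>': "\<omega>' \<in> space P" "h n \<omega>' = h n \<omega>"
        using pick[OF that(2)] unfolding \<omega>'_def by auto
      have "dist (g \<omega>') (g \<omega>) \<le> dist (h n \<omega>') (g \<omega>') + dist (h n \<omega>) (g \<omega>)"
        using \<omega>'(2) dist_triangle3[of "g \<omega>'" "g \<omega>" "h n \<omega>"] by (simp add: dist_commute)
      also have "\<dots> < d/2 + d/2"
        using N that \<omega>'(1) by (intro add_strict_mono) auto
      also have "\<dots> = d"
        by simp
      finally show ?thesis
        using d g_S \<omega>'(1) that(2) unfolding h'_def \<omega>'_def by blast
    qed
    then show "\<exists>N. \<forall>n\<ge>N. \<forall>\<omega>\<in>space P. dist (h' n \<omega>) (F (g \<omega>)) < e"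
      by blast
  qed
  ultimately show ?thesis
    unfolding bochner_meas_iff_uniform_limit by blast
qed

section \<open>Cones with a strictly positive functional\<close>

locale cone_functional =
  fixes C :: "'e::banach set" and ell :: "'e \<Rightarrow> real" and K \<rho> :: real
  assumes closed_C: "closed C"
    and cone_C: "\<forall>t\<ge>0. \<forall>x\<in>C. t *\<^sub>R x \<in> C" and C_nonempty: "C \<noteq> {}"
    and bounded_linear_ell: "bounded_linear ell" and onorm_ell: "onorm ell \<le> 1"
    and K_ge_1: "1 \<le> K" and norm_div_K_le_ell: "\<forall>x\<in>C. norm x / K \<le> ell x"
    and \<rho>_pos: "0 < \<rho>" and \<rho>_le_1: "\<rho> \<le> 1"
begin

sublocale ell: bounded_linear ell
  by (rule bounded_linear_ell)

lemma scaleR_in_cone: "x \<in> C \<Longrightarrow> 0 \<le> t \<Longrightarrow> t *\<^sub>R x \<in> C"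
  using cone_C by blast

lemma zero_in_cone: "0 \<in> C"
  using C_nonempty scaleR_in_cone[of _ 0] by force

lemma abs_ell_le_norm: "\<bar>ell x\<bar> \<le> norm x"
proof -
  have "\<bar>ell x\<bar> \<le> onorm ell * norm x"
    using onorm[OF bounded_linear_ell, of x] by simp
  also have "\<dots> \<le> norm x"
    using onorm_ell onorm_pos_le[OF bounded_linear_ell] by (simp add: mult_left_le_one_le)
  finally show ?thesis .
qed

lemma norm_le_K_ell: "x \<in> C \<Longrightarrow> norm x \<le> K * ell x"
  using norm_div_K_le_ell K_ge_1 by (auto simp: pos_divide_le_eq mult.commute)

lemma ell_pos: "x \<in> C \<Longrightarrow> x \<noteq> 0 \<Longrightarrow> 0 < ell x"
proof -
  assume "x \<in> C" "x \<noteq> 0"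
  then have "0 < norm x / K"
    using K_ge_1 by simp
  then show ?thesis
    using norm_div_K_le_ell \<open>x \<in> C\<close> by (meson less_le_trans)
qed

lemma ell_nonneg: "x \<in> C \<Longrightarrow> 0 \<le> ell x"
  using ell_pos[of x] by (cases "x = 0") auto

lemma cone_rho_subset: "cone_rho C \<rho> \<subseteq> C"
  unfolding cone_rho_def by blast

lemma cone_rho_diff_in_cone: "p \<in> cone_rho C \<rho> \<Longrightarrow> norm q < \<rho> * norm p \<Longrightarrow> p - q \<in> C"
  unfolding cone_rho_def by (auto simp: dist_norm subset_iff)

lemma cone_rho_scaleR:
  assumes p: "p \<in> cone_rho C \<rho>" and t: "0 < t"
  shows "t *\<^sub>R p \<in> cone_rho C \<rho>"
proof -
  have "y \<in> C" if "y \<in> ball (t *\<^sub>R p) (\<rho> * norm (t *\<^sub>R p))" for y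
  proof -
    have "t *\<^sub>R p - y = t *\<^sub>R (p - (1/t) *\<^sub>R y)"
      using t by (simp add: algebra_simps)
    then have "t * norm (p - (1/t) *\<^sub>R y) = norm (t *\<^sub>R p - y)"
      using t by simp
    also have "\<dots> < t * (\<rho> * norm p)"
      using that t by (simp add: dist_norm mult.left_commute)
    finally have "p - (p - (1/t) *\<^sub>R y) \<in> C"
      using t by (intro cone_rho_diff_in_cone[OF p]) simp
    then show ?thesis
      using scaleR_in_cone[of "(1/t) *\<^sub>R y" t] t by simp
  qed
  then show ?thesis
    using p t cone_rho_subset by (auto simp: cone_rho_def intro: scaleR_in_cone)
qed

lemma cone_rho_l1_cone_rho: "x \<in> cone_rho_l1 C \<rho> ell \<Longrightarrow> x \<in> cone_rho C \<rho>"
  unfolding cone_rho_l1_def by blast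

lemma cone_rho_l1_in_cone: "x \<in> cone_rho_l1 C \<rho> ell \<Longrightarrow> x \<in> C"
  using cone_rho_l1_cone_rho cone_rho_subset by blast

lemma cone_rho_l1_ell: "x \<in> cone_rho_l1 C \<rho> ell \<Longrightarrow> ell x = 1"
  unfolding cone_rho_l1_def by blast

lemma cone_rho_l1_nonzero: "x \<in> cone_rho_l1 C \<rho> ell \<Longrightarrow> x \<noteq> 0"
  using cone_rho_l1_ell by force

lemma cone_rho_l1_norm_ge_1: "x \<in> cone_rho_l1 C \<rho> ell \<Longrightarrow> 1 \<le> norm x"
  using cone_rho_l1_ell[of x] abs_ell_le_norm[of x] by simp

lemma cone_rho_l1_norm_le_K: "x \<in> cone_rho_l1 C \<rho> ell \<Longrightarrow> norm x \<le> K"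
  using cone_rho_l1_ell cone_rho_l1_in_cone norm_le_K_ell by fastforce

lemma closed_cone_rho_l1: "closed (cone_rho_l1 C \<rho> ell)"
  unfolding closed_sequential_limits
proof (intro allI impI, elim conjE)
  fix x y assume x: "\<forall>n. x n \<in> cone_rho_l1 C \<rho> ell" and lim: "x \<longlonglongrightarrow> y"
  have "y \<in> C"
    using closed_sequentially[OF closed_C _ lim] x cone_rho_l1_in_cone by blast
  moreover have "ell y = 1"
    using LIMSEQ_unique[OF ell.tendsto[OF lim]] x cone_rho_l1_ell by simp
  moreover have "z \<in> C" if z: "z \<in> ball y (\<rho> * norm y)" for z
  proof -
    have "(\<lambda>n. \<rho> * norm (x n) - dist (x n) z) \<longlonglongrightarrow> \<rho> * norm y - dist y z"
      by (intro tendsto_intros lim)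
    moreover have "0 < \<rho> * norm y - dist y z"
      using z by simp
    ultimately have "\<forall>\<^sub>F n in sequentially. 0 < \<rho> * norm (x n) - dist (x n) z"
      by (rule order_tendstoD(1))
    then obtain n where "0 < \<rho> * norm (x n) - dist (x n) z"
      unfolding eventually_sequentially by blast
    then show ?thesis
      using x cone_rho_l1_cone_rho unfolding cone_rho_def by (auto simp: subset_iff)
  qed
  ultimately show "y \<in> cone_rho_l1 C \<rho> ell"
    unfolding cone_rho_l1_def cone_rho_def by blast
qed

definition normalized :: "'e \<Rightarrow> 'e" where
  "normalized x = (1 / ell x) *\<^sub>R x"

lemma normalized_in_cone_rho_l1:
  assumes "p \<in> cone_rho C \<rho>" "p \<noteq> 0"
  shows "normalized p \<in> cone_rho_l1 C \<rho> ell"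
proof -
  have "0 < ell p"
    using assms cone_rho_subset ell_pos by blast
  then show ?thesis
    using cone_rho_scaleR[OF assms(1)]
    unfolding cone_rho_l1_def normalized_def by (simp add: ell.scaleR)
qed

lemma tendsto_normalized:
  "(f \<longlongrightarrow> x) F \<Longrightarrow> ell x \<noteq> 0 \<Longrightarrow>
    ((\<lambda>n. normalized (f n)) \<longlongrightarrow> normalized x) F"
  unfolding normalized_def by (intro tendsto_intros ell.tendsto)

lemma lipschitz_on_normalized:
  assumes c: "0 < c" and B: "0 \<le> B"
  shows "(1/c + B / c\<^sup>2)-lipschitz_on {x. c \<le> ell x \<and> norm x \<le> B} normalized"
proof (rule lipschitz_onI)
  show "0 \<le> 1/c + B / c\<^sup>2"
    using c B by simp
  fix x y assume "x \<in> {x. c \<le> ell x \<and> norm x \<le> B}" "y \<in> {x. c \<le> ell x \<and> norm x \<le> B}"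
  then have x: "c \<le> ell x" and y: "c \<le> ell y" "norm y \<le> B"
    by auto
  have "0 < ell x" "0 < ell y"
    using c x y by linarith+
  have "\<bar>1 / ell x - 1 / ell y\<bar> = \<bar>ell (x - y)\<bar> / (ell x * ell y)"
    using \<open>0 < ell x\<close> \<open>0 < ell y\<close>
    by (simp add: ell.diff divide_simps abs_minus_commute)
  also have "\<dots> \<le> norm (x - y) / (ell x * ell y)"
    using \<open>0 < ell x\<close> \<open>0 < ell y\<close> abs_ell_le_norm by (simp add: divide_right_mono)
  also have "\<dots> \<le> norm (x - y) / c\<^sup>2"
    using c x y unfolding power2_eq_square by (intro divide_left_mono mult_mono) auto
  finally have ratio: "\<bar>1 / ell x - 1 / ell y\<bar> \<le> norm (x - y) / c\<^sup>2" .
  have "normalized x - normalized y = (1 / ell x) *\<^sub>R (x - y) + (1 / ell x - 1 / ell y) *\<^sub>R y"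
    unfolding normalized_def by (simp add: algebra_simps)
  then have "dist (normalized x) (normalized y)
      \<le> norm ((1 / ell x) *\<^sub>R (x - y)) + norm ((1 / ell x - 1 / ell y) *\<^sub>R y)"
    unfolding dist_norm by (metis norm_triangle_ineq)
  also have "\<dots> = 1 / ell x * norm (x - y) + \<bar>1 / ell x - 1 / ell y\<bar> * norm y"
    using \<open>0 < ell x\<close> by simp
  also have "\<dots> \<le> 1 / c * norm (x - y) + norm (x - y) / c\<^sup>2 * B"
    using c x y ratio by (intro add_mono mult_mono) (auto simp: frac_le)
  also have "\<dots> = (1/c + B / c\<^sup>2) * dist x y"
    by (simp add: dist_norm algebra_simps)
  finally show "dist (normalized x) (normalized y) \<le> (1/c + B / c\<^sup>2) * dist x y" .
qed

definition rho_positive :: "('e \<Rightarrow> 'e) \<Rightarrow> bool" where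
  "rho_positive L \<longleftrightarrow> bounded_linear L \<and> L ` (C - {0}) \<subseteq> cone_rho C \<rho> - {0}"

lemma rho_positive_cone_rho: "rho_positive L \<Longrightarrow> x \<in> C \<Longrightarrow> x \<noteq> 0 \<Longrightarrow> L x \<in> cone_rho C \<rho>"
  unfolding rho_positive_def by blast

lemma rho_positive_nonzero: "rho_positive L \<Longrightarrow> x \<in> C \<Longrightarrow> x \<noteq> 0 \<Longrightarrow> L x \<noteq> 0"
  unfolding rho_positive_def by blast

lemma rho_positive_zero: "rho_positive L \<Longrightarrow> L 0 = 0"
  unfolding rho_positive_def by (simp add: linear_simps)

lemma rho_positive_cone_rho_or_zero:
  "rho_positive L \<Longrightarrow> x \<in> C \<Longrightarrow> L x \<in> cone_rho C \<rho> \<or> L x = 0"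
  using rho_positive_cone_rho rho_positive_zero by (cases "x = 0") auto

lemma rho_positive_in_cone: "rho_positive L \<Longrightarrow> x \<in> C \<Longrightarrow> L x \<in> C"
  using rho_positive_cone_rho_or_zero cone_rho_subset zero_in_cone by fastforce

lemma ell_rho_positive_pos: "rho_positive L \<Longrightarrow> x \<in> C \<Longrightarrow> x \<noteq> 0 \<Longrightarrow> 0 < ell (L x)"
  using rho_positive_in_cone rho_positive_nonzero ell_pos by blast

lemma normalized_rho_positive_in_cone_rho_l1:
  "rho_positive L \<Longrightarrow> x \<in> C \<Longrightarrow> x \<noteq> 0 \<Longrightarrow> normalized (L x) \<in> cone_rho_l1 C \<rho> ell"
  using rho_positive_cone_rho rho_positive_nonzero normalized_in_cone_rho_l1 by blast

lemma norm_rho_positive_le_ell: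
  assumes L: "rho_positive L" and x: "x \<in> cone_rho C \<rho>" and y: "norm y < \<rho> * norm x"
  shows "norm (L y) \<le> K * ell (L x)"
proof -
  interpret L: bounded_linear L
    using L unfolding rho_positive_def by blast
  have "x + y \<in> C" "x - y \<in> C"
    using cone_rho_diff_in_cone[OF x, of "- y"] cone_rho_diff_in_cone[OF x, of y] y by simp_all
  then have plus: "L x + L y \<in> C" and minus: "L x - L y \<in> C"
    using rho_positive_in_cone[OF L] by (force simp: L.diff L.add)+
  have "2 * norm (L y) = norm ((L x + L y) - (L x - L y))"
    by (simp flip: scaleR_2)
  also have "\<dots> \<le> norm (L x + L y) + norm (L x - L y)"
    by (rule norm_triangle_ineq4)
  also have "\<dots> \<le> K * ell (L x + L y) + K * ell (L x - L y)"
    using norm_le_K_ell plus minus by (intro add_mono)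
  also have "\<dots> = 2 * (K * ell (L x))"
    by (simp add: ell.add ell.diff algebra_simps)
  finally show ?thesis
    by simp
qed

lemma onorm_rho_positive_le_ell:
  assumes L: "rho_positive L" and x: "x \<in> cone_rho C \<rho>"
  shows "onorm L * (\<rho> * norm x) \<le> 2 * K * ell (L x)"
proof (cases "x = 0")
  case True
  then show ?thesis
    using rho_positive_zero[OF L] by simp
next
  case False
  interpret L: bounded_linear L
    using L unfolding rho_positive_def by blast
  define s where "s = \<rho> * norm x / 2"
  have s: "0 < s" "s < \<rho> * norm x"
    using \<rho>_pos False by (simp_all add: s_def)
  have "norm (L z) \<le> K * ell (L x) / s * norm z" for z
  proof (cases "z = 0")
    case False
    have "s / norm z * norm (L z) = norm (L ((s / norm z) *\<^sub>R z))"
      using s by (simp add: L.scaleR)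
    also have "\<dots> \<le> K * ell (L x)"
      using s False by (intro norm_rho_positive_le_ell[OF L x]) simp
    finally show ?thesis
      using s False by (simp add: field_simps)
  qed simp
  then have "onorm L \<le> K * ell (L x) / s"
    by (rule onorm_bound[rotated]) (use s K_ge_1 ell_nonneg rho_positive_in_cone[OF L]
        cone_rho_subset x in auto)
  then show ?thesis
    using s by (simp add: s_def field_simps)
qed

section \<open>Birkhoff contraction\<close>

text \<open>In the order defined by C, the bracket says a v \<le> u \<le> b v; the infimum of ln (b / a) over
  all brackets is the Hilbert projective distance of u and v.\<close>
definition cone_bracket :: "'e \<Rightarrow> 'e \<Rightarrow> real \<Rightarrow> real \<Rightarrow> bool" where
  "cone_bracket u v a b \<longleftrightarrow> 0 < a \<and> a \<le> b \<and> u - a *\<^sub>R v \<in> C \<and> b *\<^sub>R v - u \<in> C"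

definition \<gamma> :: real where
  "\<gamma> = \<rho> / (2 * K)"

lemma \<gamma>_pos: "0 < \<gamma>"
  using \<rho>_pos K_ge_1 by (simp add: \<gamma>_def)

lemma \<gamma>_le_1: "\<gamma> \<le> 1"
  using \<rho>_le_1 K_ge_1 by (simp add: \<gamma>_def field_simps)

lemma cone_rho_minus_multiple_in_cone:
  assumes p: "p \<in> cone_rho C \<rho> \<or> p = 0" and q: "q \<in> C" "q \<noteq> 0"
  shows "p - (\<gamma> * ell p / ell q) *\<^sub>R q \<in> C"
proof (cases "p = 0")
  case True
  then show ?thesis
    using zero_in_cone by simp
next
  case False
  then have p: "p \<in> cone_rho C \<rho>"
    using p by blast
  have "0 < ell q" "0 < ell p"
    using ell_pos q p False cone_rho_subset by blast+
  have "norm ((\<gamma> * ell p / ell q) *\<^sub>R q) = \<gamma> * ell p / ell q * norm q"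
    using \<gamma>_pos \<open>0 < ell q\<close> \<open>0 < ell p\<close> by simp
  also have "\<dots> \<le> \<gamma> * ell p / ell q * (K * ell q)"
    using norm_le_K_ell[OF q(1)] \<gamma>_pos \<open>0 < ell q\<close> \<open>0 < ell p\<close> by (intro mult_left_mono) auto
  also have "\<dots> = \<rho> / 2 * ell p"
    using K_ge_1 \<open>0 < ell q\<close> by (simp add: \<gamma>_def)
  also have "\<dots> \<le> \<rho> / 2 * norm p"
    using abs_ell_le_norm[of p] \<rho>_pos by (intro mult_left_mono) auto
  also have "\<dots> < \<rho> * norm p"
    using \<rho>_pos False by simp
  finally show ?thesis
    by (rule cone_rho_diff_in_cone[OF p])
qed

lemma cone_bracket_rho_positive:
  assumes L: "rho_positive L" and v: "v \<in> C" "v \<noteq> 0" and uv: "cone_bracket u v a b"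
  shows "\<exists>a' b'. cone_bracket (L u) (L v) a' b' \<and> b'/a' - 1 \<le> (1 - \<gamma>) * (b/a - 1)"
proof -
  interpret L: bounded_linear L
    using L unfolding rho_positive_def by blast
  have a: "0 < a" "a \<le> b" and lower: "u - a *\<^sub>R v \<in> C" and upper: "b *\<^sub>R v - u \<in> C"
    using uv unfolding cone_bracket_def by auto
  have Lv: "L v \<in> C" "L v \<noteq> 0" "0 < ell (L v)"
    using rho_positive_in_cone[OF L v(1)] rho_positive_nonzero[OF L v] ell_rho_positive_pos[OF L v]
    by auto
  define A where "A = L u - a *\<^sub>R L v"
  define B where "B = b *\<^sub>R L v - L u"
  have A: "A \<in> cone_rho C \<rho> \<or> A = 0" "0 \<le> ell A"
    using rho_positive_cone_rho_or_zero[OF L lower] rho_positive_in_cone[OF L lower] ell_nonneg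
    by (auto simp: A_def L.diff L.scaleR)
  have B: "B \<in> cone_rho C \<rho> \<or> B = 0" "0 \<le> ell B"
    using rho_positive_cone_rho_or_zero[OF L upper] rho_positive_in_cone[OF L upper] ell_nonneg
    by (auto simp: B_def L.diff L.scaleR)
  define a' where "a' = a + \<gamma> * ell A / ell (L v)"
  define b' where "b' = b - \<gamma> * ell B / ell (L v)"
  have "L u - a' *\<^sub>R L v = A - (\<gamma> * ell A / ell (L v)) *\<^sub>R L v"
    unfolding A_def a'_def by (simp add: algebra_simps)
  then have lower': "L u - a' *\<^sub>R L v \<in> C"
    using cone_rho_minus_multiple_in_cone[OF A(1) Lv(1,2)] by simp
  have "b' *\<^sub>R L v - L u = B - (\<gamma> * ell B / ell (L v)) *\<^sub>R L v"
    unfolding B_def b'_def by (simp add: algebra_simps)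
  then have upper': "b' *\<^sub>R L v - L u \<in> C"
    using cone_rho_minus_multiple_in_cone[OF B(1) Lv(1,2)] by simp
  have "ell A + ell B = (b - a) * ell (L v)"
    unfolding A_def B_def by (simp add: ell.diff ell.scaleR algebra_simps)
  then have "\<gamma> * ell A / ell (L v) + \<gamma> * ell B / ell (L v) = \<gamma> * (b - a)"
    using Lv(3) by (simp flip: add_divide_distrib distrib_left)
  then have gap: "b' - a' = (1 - \<gamma>) * (b - a)"
    unfolding a'_def b'_def by (simp add: algebra_simps)
  have "a \<le> a'"
    using \<gamma>_pos A(2) Lv(3) by (simp add: a'_def)
  moreover have "a' \<le> b'"
  proof -
    have "0 \<le> (1 - \<gamma>) * (b - a)"
      using \<gamma>_le_1 a by simp
    then show ?thesis
      using gap by linarith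
  qed
  ultimately have "cone_bracket (L u) (L v) a' b'"
    using a lower' upper' unfolding cone_bracket_def by simp
  moreover have "b'/a' - 1 \<le> (1 - \<gamma>) * (b/a - 1)"
  proof -
    have "b'/a' - 1 = (1 - \<gamma>) * (b - a) / a'"
      using gap \<open>a \<le> a'\<close> a by (simp add: field_simps)
    also have "\<dots> \<le> (1 - \<gamma>) * (b - a) / a"
      using \<open>a \<le> a'\<close> a \<gamma>_le_1 by (intro divide_left_mono) auto
    also have "\<dots> = (1 - \<gamma>) * (b/a - 1)"
      using a by (simp add: field_simps)
    finally show ?thesis .
  qed
  ultimately show ?thesis
    by blast
qed

lemma cone_bracket_scaleR:
  assumes "cone_bracket u v a b" "0 < c" "0 < d"
  shows "cone_bracket ((1/c) *\<^sub>R u) ((1/d) *\<^sub>R v) (a * d / c) (b * d / c)"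
proof -
  have "(1/c) *\<^sub>R u - (a * d / c) *\<^sub>R ((1/d) *\<^sub>R v) = (1/c) *\<^sub>R (u - a *\<^sub>R v)"
    "(b * d / c) *\<^sub>R ((1/d) *\<^sub>R v) - (1/c) *\<^sub>R u = (1/c) *\<^sub>R (b *\<^sub>R v - u)"
    using assms by (simp_all add: algebra_simps)
  then show ?thesis
    using assms scaleR_in_cone unfolding cone_bracket_def by (auto simp: divide_right_mono)
qed

lemma cone_bracket_normalized_rho_positive:
  assumes L: "rho_positive L" and u: "u \<in> C" "u \<noteq> 0" and v: "v \<in> C" "v \<noteq> 0"
    and uv: "cone_bracket u v a b"
  shows "\<exists>a' b'. cone_bracket (normalized (L u)) (normalized (L v)) a' b'
                 \<and> b'/a' - 1 \<le> (1 - \<gamma>) * (b/a - 1)"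
proof -
  obtain a' b' where bracket: "cone_bracket (L u) (L v) a' b'"
    and ratio: "b'/a' - 1 \<le> (1 - \<gamma>) * (b/a - 1)"
    using cone_bracket_rho_positive[OF L v uv] by blast
  define c d where "c = ell (L u)" and "d = ell (L v)"
  have "0 < c" "0 < d" "0 < a'"
    using ell_rho_positive_pos[OF L] u v bracket unfolding c_def d_def cone_bracket_def by auto
  then have "(b' * d / c) / (a' * d / c) = b' / a'"
    by simp
  moreover have "cone_bracket (normalized (L u)) (normalized (L v)) (a' * d / c) (b' * d / c)"
    using cone_bracket_scaleR[OF bracket \<open>0 < c\<close> \<open>0 < d\<close>]
    unfolding normalized_def c_def d_def .
  ultimately show ?thesis
    using ratio by (intro exI[of _ "a' * d / c"] exI[of _ "b' * d / c"]) simp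
qed

lemma norm_diff_le_cone_bracket:
  assumes uv: "cone_bracket u v a b" and "ell u = 1" "ell v = 1" "v \<in> C"
  shows "norm (u - v) \<le> 2 * K * (b/a - 1)"
proof -
  have a: "0 < a" "a \<le> b" and lower: "u - a *\<^sub>R v \<in> C" and upper: "b *\<^sub>R v - u \<in> C"
    using uv unfolding cone_bracket_def by auto
  have "ell (u - a *\<^sub>R v) = 1 - a" "ell (b *\<^sub>R v - u) = b - 1"
    using assms by (simp_all add: ell.diff ell.scaleR)
  then have "a \<le> 1" "1 \<le> b" and norm_lower: "norm (u - a *\<^sub>R v) \<le> K * (1 - a)"
    using ell_nonneg[OF lower] ell_nonneg[OF upper] norm_le_K_ell[OF lower] by auto
  have "norm (u - v) \<le> norm (u - a *\<^sub>R v) + norm ((1 - a) *\<^sub>R v)"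
    using norm_triangle_ineq4[of "u - a *\<^sub>R v" "(1 - a) *\<^sub>R v"] by (simp add: algebra_simps)
  also have "\<dots> \<le> K * (1 - a) + (1 - a) * K"
    using norm_lower norm_le_K_ell[OF \<open>v \<in> C\<close>] \<open>ell v = 1\<close> \<open>a \<le> 1\<close>
    by (intro add_mono) (auto intro: mult_left_mono)
  also have "\<dots> = 2 * K * (1 - a)"
    by simp
  also have "\<dots> \<le> 2 * K * (b/a - 1)"
  proof -
    have "1 - a \<le> b - a"
      using \<open>1 \<le> b\<close> by simp
    also have "\<dots> \<le> (b - a) / a"
      using a \<open>a \<le> 1\<close> by (simp add: le_divide_eq mult_left_le)
    also have "\<dots> = b/a - 1"
      using a by (simp add: field_simps)
    finally show ?thesis
      using K_ge_1 by simp
  qed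
  finally show ?thesis .
qed

lemma cone_bracket_cone_rho_l1:
  assumes x: "x \<in> cone_rho_l1 C \<rho> ell" and y: "y \<in> cone_rho_l1 C \<rho> ell"
  shows "cone_bracket x y \<gamma> (1/\<gamma>)"
proof -
  have small: "norm (\<gamma> *\<^sub>R z) < \<rho> * norm w"
    if "z \<in> cone_rho_l1 C \<rho> ell" "w \<in> cone_rho_l1 C \<rho> ell" for z w
  proof -
    have "norm (\<gamma> *\<^sub>R z) \<le> \<gamma> * K"
      using cone_rho_l1_norm_le_K[OF that(1)] \<gamma>_pos by (simp add: mult_left_mono)
    also have "\<dots> < \<rho>"
      using \<rho>_pos K_ge_1 by (simp add: \<gamma>_def)
    also have "\<dots> \<le> \<rho> * norm w"
      using cone_rho_l1_norm_ge_1[OF that(2)] \<rho>_pos by simp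
    finally show ?thesis .
  qed
  have "x - \<gamma> *\<^sub>R y \<in> C" "y - \<gamma> *\<^sub>R x \<in> C"
    using cone_rho_diff_in_cone cone_rho_l1_cone_rho small x y by blast+
  moreover have "(1/\<gamma>) *\<^sub>R y - x = (1/\<gamma>) *\<^sub>R (y - \<gamma> *\<^sub>R x)"
    using \<gamma>_pos by (simp add: algebra_simps)
  moreover have "\<gamma> \<le> 1/\<gamma>"
    using \<gamma>_pos \<gamma>_le_1 by (simp add: le_divide_eq mult_le_one)
  ultimately show ?thesis
    using \<gamma>_pos scaleR_in_cone unfolding cone_bracket_def by auto
qed

end

section \<open>Fixed sections of the projective cocycle\<close>

locale cone_cocycle = cone_functional C ell K \<rho>
  for C :: "'e::banach set" and ell K \<rho> +
  fixes Lf :: "'w \<Rightarrow> 'e \<Rightarrow> 'e" and \<tau>i :: "'w \<Rightarrow> 'w" and \<Omega> :: "'w set"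
  assumes rho_positive_Lf: "\<And>\<omega>. \<omega> \<in> \<Omega> \<Longrightarrow> rho_positive (Lf \<omega>)"
    and \<tau>i_in: "\<And>\<omega>. \<omega> \<in> \<Omega> \<Longrightarrow> \<tau>i \<omega> \<in> \<Omega>"
begin

abbreviation slice :: "'e set" where
  "slice \<equiv> cone_rho_l1 C \<rho> ell"

abbreviation proj :: "('w \<Rightarrow> 'e) \<Rightarrow> 'w \<Rightarrow> 'e" where
  "proj \<equiv> proj_op Lf \<tau>i ell"

lemma proj_eq_normalized: "proj g \<omega> = normalized (Lf (\<tau>i \<omega>) (g (\<tau>i \<omega>)))"
  unfolding proj_op_def normalized_def ..

lemma funpow_Suc_proj:
  "(proj ^^ Suc n) g \<omega> = normalized (Lf (\<tau>i \<omega>) ((proj ^^ n) g (\<tau>i \<omega>)))"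
  unfolding funpow.simps o_apply by (rule proj_eq_normalized)

lemma proj_in_slice:
  assumes "\<And>\<omega>. \<omega> \<in> \<Omega> \<Longrightarrow> g \<omega> \<in> slice" and "\<omega> \<in> \<Omega>"
  shows "proj g \<omega> \<in> slice"
proof -
  have "g (\<tau>i \<omega>) \<in> slice"
    using assms \<tau>i_in by blast
  then show ?thesis
    unfolding proj_eq_normalized
    using normalized_rho_positive_in_cone_rho_l1[OF rho_positive_Lf[OF \<tau>i_in[OF \<open>\<omega> \<in> \<Omega>\<close>]]]
      cone_rho_l1_in_cone cone_rho_l1_nonzero by blast
qed

lemma funpow_proj_in_slice:
  "(\<And>\<omega>. \<omega> \<in> \<Omega> \<Longrightarrow> g \<omega> \<in> slice) \<Longrightarrow> \<omega> \<in> \<Omega> \<Longrightarrow>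
    (proj ^^ n) g \<omega> \<in> slice"
  by (induction n arbitrary: \<omega>) (auto intro: proj_in_slice)

lemma cone_bracket_funpow_proj:
  assumes g: "\<And>\<omega>. \<omega> \<in> \<Omega> \<Longrightarrow> g \<omega> \<in> slice"
    and h: "\<And>\<omega>. \<omega> \<in> \<Omega> \<Longrightarrow> h \<omega> \<in> slice"
    and "\<omega> \<in> \<Omega>"
  shows "\<exists>a b. cone_bracket ((proj ^^ n) g \<omega>) ((proj ^^ n) h \<omega>) a b
               \<and> b/a - 1 \<le> (1 - \<gamma>) ^ n * (1/\<gamma>\<^sup>2 - 1)"
  using \<open>\<omega> \<in> \<Omega>\<close>
proof (induction n arbitrary: \<omega>)
  case 0
  then show ?case
    using cone_bracket_cone_rho_l1[OF g h] \<gamma>_pos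
    by (intro exI[of _ \<gamma>] exI[of _ "1/\<gamma>"]) (simp add: power2_eq_square)
next
  case (Suc n)
  define u v where "u = (proj ^^ n) g (\<tau>i \<omega>)" and "v = (proj ^^ n) h (\<tau>i \<omega>)"
  have "u \<in> slice" "v \<in> slice"
    unfolding u_def v_def using funpow_proj_in_slice g h \<tau>i_in Suc.prems by blast+
  obtain a b where "cone_bracket u v a b" and ratio: "b/a - 1 \<le> (1 - \<gamma>) ^ n * (1/\<gamma>\<^sup>2 - 1)"
    using Suc.IH \<tau>i_in Suc.prems unfolding u_def v_def by blast
  then obtain a' b' where
    "cone_bracket (normalized (Lf (\<tau>i \<omega>) u)) (normalized (Lf (\<tau>i \<omega>) v)) a' b'"
    and "b'/a' - 1 \<le> (1 - \<gamma>) * (b/a - 1)"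
    using cone_bracket_normalized_rho_positive rho_positive_Lf \<tau>i_in Suc.prems
      \<open>u \<in> slice\<close> \<open>v \<in> slice\<close> cone_rho_l1_in_cone cone_rho_l1_nonzero by metis
  moreover have "(1 - \<gamma>) * (b/a - 1) \<le> (1 - \<gamma>) ^ Suc n * (1/\<gamma>\<^sup>2 - 1)"
    using mult_left_mono[OF ratio, of "1 - \<gamma>"] \<gamma>_le_1 by (simp add: mult.assoc)
  ultimately show ?case
    unfolding funpow_Suc_proj u_def v_def by (blast intro: order_trans)
qed

definition decay :: "nat \<Rightarrow> real" where
  "decay n = 2 * K * ((1 - \<gamma>) ^ n * (1/\<gamma>\<^sup>2 - 1))"

lemma decay_tendsto_0: "decay \<longlonglongrightarrow> 0"
proof -
  have "(\<lambda>n. (1 - \<gamma>) ^ n) \<longlonglongrightarrow> 0"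
    using \<gamma>_pos \<gamma>_le_1 by (intro LIMSEQ_power_zero) auto
  then show ?thesis
    unfolding decay_def by (intro tendsto_mult_right_zero tendsto_mult_left_zero)
qed

lemma norm_diff_funpow_proj_le_decay:
  assumes g: "\<And>\<omega>. \<omega> \<in> \<Omega> \<Longrightarrow> g \<omega> \<in> slice"
    and h: "\<And>\<omega>. \<omega> \<in> \<Omega> \<Longrightarrow> h \<omega> \<in> slice"
    and \<omega>: "\<omega> \<in> \<Omega>"
  shows "norm ((proj ^^ n) g \<omega> - (proj ^^ n) h \<omega>) \<le> decay n"
proof -
  obtain a b where "cone_bracket ((proj ^^ n) g \<omega>) ((proj ^^ n) h \<omega>) a b"
    and ratio: "b/a - 1 \<le> (1 - \<gamma>) ^ n * (1/\<gamma>\<^sup>2 - 1)"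
    using cone_bracket_funpow_proj[of g h, OF g h \<omega>] by blast
  then have "norm ((proj ^^ n) g \<omega> - (proj ^^ n) h \<omega>) \<le> 2 * K * (b/a - 1)"
    using funpow_proj_in_slice g h \<omega> cone_rho_l1_ell cone_rho_l1_in_cone
    by (intro norm_diff_le_cone_bracket) blast+
  also have "\<dots> \<le> decay n"
    unfolding decay_def using ratio K_ge_1 by simp
  finally show ?thesis .
qed

lemma funpow_proj_fixed:
  assumes fixed: "\<And>\<omega>. \<omega> \<in> \<Omega> \<Longrightarrow> g \<omega> = proj g \<omega>"
  shows "\<omega> \<in> \<Omega> \<Longrightarrow> (proj ^^ n) g \<omega> = g \<omega>"
proof (induction n arbitrary: \<omega>)
  case (Suc n)
  then have "(proj ^^ n) g (\<tau>i \<omega>) = g (\<tau>i \<omega>)"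
    using \<tau>i_in by blast
  then show ?case
    unfolding funpow_Suc_proj fixed[OF Suc.prems] proj_eq_normalized by simp
qed simp

lemma fixed_sections_unique:
  assumes g: "\<And>\<omega>. \<omega> \<in> \<Omega> \<Longrightarrow> g \<omega> \<in> slice \<and> g \<omega> = proj g \<omega>"
    and h: "\<And>\<omega>. \<omega> \<in> \<Omega> \<Longrightarrow> h \<omega> \<in> slice \<and> h \<omega> = proj h \<omega>"
    and \<omega>: "\<omega> \<in> \<Omega>"
  shows "g \<omega> = h \<omega>"
proof -
  have "\<And>\<omega>. \<omega> \<in> \<Omega> \<Longrightarrow> g \<omega> = proj g \<omega>"
    and "\<And>\<omega>. \<omega> \<in> \<Omega> \<Longrightarrow> h \<omega> = proj h \<omega>"
    using g h by blast+
  then have "norm (g \<omega> - h \<omega>) \<le> decay n" for n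
    using norm_diff_funpow_proj_le_decay[of g h \<omega> n] funpow_proj_fixed[of g \<omega> n]
      funpow_proj_fixed[of h \<omega> n] g h \<omega> by metis
  then have "norm (g \<omega> - h \<omega>) \<le> 0"
    using LIMSEQ_le_const[OF decay_tendsto_0] by blast
  then show ?thesis
    by simp
qed

lemma uniformly_Cauchy_funpow_proj:
  assumes g: "\<And>\<omega>. \<omega> \<in> \<Omega> \<Longrightarrow> g \<omega> \<in> slice"
  shows "uniformly_Cauchy_on \<Omega> (\<lambda>n. (proj ^^ n) g)"
proof (rule uniformly_Cauchy_onI')
  fix e :: real assume "0 < e"
  then obtain M where M: "\<And>m. m \<ge> M \<Longrightarrow> decay m < e"
    using order_tendstoD(2)[OF decay_tendsto_0] unfolding eventually_sequentially by blast
  have "dist ((proj ^^ m) g \<omega>) ((proj ^^ n) g \<omega>) < e" if "\<omega> \<in> \<Omega>" "m \<ge> M" "n > m" for \<omega> m n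
  proof -
    have "(proj ^^ n) g = (proj ^^ m) ((proj ^^ (n - m)) g)"
      using \<open>n > m\<close> by (metis funpow_add le_add_diff_inverse less_imp_le o_apply)
    then have "dist ((proj ^^ m) g \<omega>) ((proj ^^ n) g \<omega>) \<le> decay m"
      unfolding dist_norm using g funpow_proj_in_slice \<open>\<omega> \<in> \<Omega>\<close>
      by (simp add: norm_diff_funpow_proj_le_decay)
    then show ?thesis
      using M \<open>m \<ge> M\<close> by fastforce
  qed
  then show "\<exists>M. \<forall>\<omega>\<in>\<Omega>. \<forall>m\<ge>M. \<forall>n>m.
      dist ((proj ^^ m) g \<omega>) ((proj ^^ n) g \<omega>) < e"
    by blast
qed

lemma uniform_limit_funpow_proj_fixed:
  assumes g: "\<And>\<omega>. \<omega> \<in> \<Omega> \<Longrightarrow> g \<omega> \<in> slice"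
  obtains f where "uniform_limit \<Omega> (\<lambda>n. (proj ^^ n) g) f sequentially"
    and "\<And>\<omega>. \<omega> \<in> \<Omega> \<Longrightarrow> f \<omega> \<in> slice \<and> f \<omega> = proj f \<omega>"
proof -
  obtain f where lim: "uniform_limit \<Omega> (\<lambda>n. (proj ^^ n) g) f sequentially"
    using Cauchy_uniformly_convergent[OF uniformly_Cauchy_funpow_proj[of g, OF g]]
    unfolding uniformly_convergent_on_def by blast
  have pointwise: "(\<lambda>n. (proj ^^ n) g \<omega>) \<longlonglongrightarrow> f \<omega>" if "\<omega> \<in> \<Omega>" for \<omega>
    using tendsto_uniform_limitI[OF lim that] .
  have slice: "f \<omega> \<in> slice" if "\<omega> \<in> \<Omega>" for \<omega>
    using closed_sequentially[OF closed_cone_rho_l1 _ pointwise[OF that]]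
      funpow_proj_in_slice[of g, OF g that] by blast
  have "f \<omega> = proj f \<omega>" if "\<omega> \<in> \<Omega>" for \<omega>
  proof -
    define L where "L = Lf (\<tau>i \<omega>)"
    have L: "rho_positive L" and \<tau>\<omega>: "\<tau>i \<omega> \<in> \<Omega>"
      using rho_positive_Lf \<tau>i_in that unfolding L_def by auto
    then interpret L: bounded_linear L
      unfolding rho_positive_def by blast
    have "ell (L (f (\<tau>i \<omega>))) \<noteq> 0"
      using ell_rho_positive_pos[OF L] slice[OF \<tau>\<omega>] cone_rho_l1_in_cone cone_rho_l1_nonzero
      by (metis less_irrefl)
    then have "(\<lambda>n. (proj ^^ Suc n) g \<omega>) \<longlonglongrightarrow> normalized (L (f (\<tau>i \<omega>)))"
      unfolding funpow_Suc_proj L_def[symmetric]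
      by (intro tendsto_normalized L.tendsto pointwise[OF \<tau>\<omega>])
    moreover have "(\<lambda>n. (proj ^^ Suc n) g \<omega>) \<longlonglongrightarrow> f \<omega>"
      using pointwise[OF that] by (rule LIMSEQ_Suc)
    moreover have "proj f \<omega> = normalized (L (f (\<tau>i \<omega>)))"
      unfolding L_def by (rule proj_eq_normalized)
    ultimately show ?thesis
      using LIMSEQ_unique by metis
  qed
  then show ?thesis
    using that lim slice by blast
qed

end

locale bochner_cone_cocycle = cone_cocycle C ell K \<rho> Lf \<tau>i "space P"
  for C :: "'e::banach set" and ell K \<rho> Lf \<tau>i and P :: "'w measure" +
  fixes \<theta> :: real
  assumes \<theta>_pos: "0 < \<theta>"
    and onorm_Lf: "\<And>\<omega>. \<omega> \<in> space P \<Longrightarrow> 1 / \<theta> \<le> onorm (Lf \<omega>) \<and> onorm (Lf \<omega>) \<le> \<theta>"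
    and bochner_meas_Lf:
      "\<And>\<phi>. \<phi> \<in> Linf_sections P \<Longrightarrow> bochner_meas P (\<lambda>\<omega>. Lf (\<tau>i \<omega>) (\<phi> (\<tau>i \<omega>)))"
begin

lemma slice_valued_Linf_sections:
  "bochner_meas P g \<Longrightarrow> (\<And>\<omega>. \<omega> \<in> space P \<Longrightarrow> g \<omega> \<in> slice) \<Longrightarrow>
    g \<in> Linf_sections P"
  unfolding Linf_sections_def using cone_rho_l1_norm_le_K by (blast intro: exI[of _ K])

lemma Lf_slice_bounds:
  assumes \<omega>: "\<omega> \<in> space P" and x: "x \<in> slice"
  shows "\<rho> / (2 * K * \<theta>) \<le> ell (Lf \<omega> x)" and "norm (Lf \<omega> x) \<le> \<theta> * K"
proof -
  have L: "rho_positive (Lf \<omega>)"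
    using rho_positive_Lf[OF \<omega>] .
  then have lin: "bounded_linear (Lf \<omega>)"
    unfolding rho_positive_def by blast
  have "\<rho> / \<theta> \<le> onorm (Lf \<omega>) * (\<rho> * norm x)"
  proof -
    have "\<rho> / \<theta> = 1 / \<theta> * (\<rho> * 1)"
      by simp
    also have "\<dots> \<le> onorm (Lf \<omega>) * (\<rho> * norm x)"
      using onorm_Lf[OF \<omega>] onorm_pos_le[OF lin] cone_rho_l1_norm_ge_1[OF x] \<rho>_pos
      by (intro mult_mono) auto
    finally show ?thesis .
  qed
  also have "\<dots> \<le> 2 * K * ell (Lf \<omega> x)"
    using onorm_rho_positive_le_ell[OF L cone_rho_l1_cone_rho[OF x]] .
  finally show "\<rho> / (2 * K * \<theta>) \<le> ell (Lf \<omega> x)"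
    using K_ge_1 \<theta>_pos by (simp add: field_simps)
  have "norm (Lf \<omega> x) \<le> onorm (Lf \<omega>) * norm x"
    using onorm[OF lin] .
  also have "\<dots> \<le> \<theta> * K"
    using onorm_Lf[OF \<omega>] cone_rho_l1_norm_le_K[OF x] onorm_pos_le[OF lin] by (intro mult_mono) auto
  finally show "norm (Lf \<omega> x) \<le> \<theta> * K" .
qed

lemma proj_Linf_sections:
  assumes g: "g \<in> Linf_sections P" and g_slice: "\<And>\<omega>. \<omega> \<in> space P \<Longrightarrow> g \<omega> \<in> slice"
  shows "proj g \<in> Linf_sections P"
proof -
  define G where "G \<omega> = Lf (\<tau>i \<omega>) (g (\<tau>i \<omega>))" for \<omega>
  define c where "c = \<rho> / (2 * K * \<theta>)"
  define S where "S = {x. c \<le> ell x \<and> norm x \<le> \<theta> * K}"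
  have "0 < c"
    using \<rho>_pos K_ge_1 \<theta>_pos by (simp add: c_def)
  have "bochner_meas P G"
    unfolding G_def by (rule bochner_meas_Lf[OF g])
  moreover have "G \<omega> \<in> S" if "\<omega> \<in> space P" for \<omega>
    using Lf_slice_bounds[OF \<tau>i_in[OF that] g_slice[OF \<tau>i_in[OF that]]]
    unfolding G_def S_def c_def by simp
  moreover have "(1/c + \<theta> * K / c\<^sup>2)-lipschitz_on S normalized"
    unfolding S_def using \<theta>_pos K_ge_1 by (intro lipschitz_on_normalized[OF \<open>0 < c\<close>]) simp
  then have "uniformly_continuous_on S normalized"
    by (rule lipschitz_on_uniformly_continuous)
  ultimately have "bochner_meas P (\<lambda>\<omega>. normalized (G \<omega>))"
    by (rule bochner_meas_compose_uniformly_continuous)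
  moreover have "proj g = (\<lambda>\<omega>. normalized (G \<omega>))"
    unfolding G_def by (rule ext) (rule proj_eq_normalized)
  ultimately show ?thesis
    using slice_valued_Linf_sections proj_in_slice[of g, OF g_slice] by metis
qed

lemma funpow_proj_Linf_sections:
  "g \<in> Linf_sections P \<Longrightarrow> (\<And>\<omega>. \<omega> \<in> space P \<Longrightarrow> g \<omega> \<in> slice) \<Longrightarrow>
    (proj ^^ n) g \<in> Linf_sections P"
proof (induction n)
  case (Suc n)
  then show ?case
    using proj_Linf_sections[of "(proj ^^ n) g"] funpow_proj_in_slice[of g] by simp
qed simp

lemma Linf_fixed_section_exists:
  assumes "x\<^sub>0 \<in> slice"
  obtains f where "f \<in> Linf_sections P"
    and "\<And>\<omega>. \<omega> \<in> space P \<Longrightarrow> f \<omega> \<in> slice \<and> f \<omega> = proj f \<omega>"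
proof -
  have const: "(\<lambda>_. x\<^sub>0) \<in> Linf_sections P"
    using slice_valued_Linf_sections[OF bochner_meas_const] assms by simp
  obtain f where lim: "uniform_limit (space P) (\<lambda>n. (proj ^^ n) (\<lambda>_. x\<^sub>0)) f sequentially"
    and fixed: "\<And>\<omega>. \<omega> \<in> space P \<Longrightarrow> f \<omega> \<in> slice \<and> f \<omega> = proj f \<omega>"
    using uniform_limit_funpow_proj_fixed[of "\<lambda>_. x\<^sub>0"] assms by auto
  have "bochner_meas P ((proj ^^ n) (\<lambda>_. x\<^sub>0))" for n
    using funpow_proj_Linf_sections[OF const] assms unfolding Linf_sections_def by blast
  then have "bochner_meas P f"
    using lim by (rule bochner_meas_uniform_limit)
  then show ?thesis
    using that[OF slice_valued_Linf_sections] fixed by blast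
qed

end

lemma bochner_cone_cocycleI:
  assumes "cone_functional C ell K \<rho>" and "0 < \<theta>"
    and "\<forall>L\<in>\<M>. bounded_linear L" "\<forall>L\<in>\<M>. L ` (C - {0}) \<subseteq> cone_rho C \<rho> - {0}"
    and "\<forall>L\<in>\<M>. 1 / \<theta> \<le> onorm L \<and> onorm L \<le> \<theta>" "\<forall>\<omega>\<in>space P. Lf \<omega> \<in> \<M>"
    and "\<forall>\<omega>\<in>space P. \<tau>i \<omega> \<in> space P"
    and "\<forall>\<phi>\<in>Linf_sections P. bochner_meas P (\<lambda>\<omega>. Lf (\<tau>i \<omega>) (\<phi> (\<tau>i \<omega>)))"
  shows "bochner_cone_cocycle C ell K \<rho> Lf \<tau>i P \<theta>"
proof -
  interpret cone_functional C ell K \<rho>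
    by (rule assms(1))
  show ?thesis
  proof unfold_locales
    fix \<omega> assume "\<omega> \<in> space P"
    then have L: "Lf \<omega> \<in> \<M>"
      using assms(6) by blast
    show "rho_positive (Lf \<omega>)"
      unfolding rho_positive_def using assms(3,4) L by blast
    show "1 / \<theta> \<le> onorm (Lf \<omega>) \<and> onorm (Lf \<omega>) \<le> \<theta>"
      using assms(5) L by blast
    show "\<tau>i \<omega> \<in> space P"
      using assms(7) \<open>\<omega> \<in> space P\<close> by blast
  next
    show "bochner_meas P (\<lambda>\<omega>. Lf (\<tau>i \<omega>) (\<phi> (\<tau>i \<omega>)))" if "\<phi> \<in> Linf_sections P" for \<phi>
      using assms(8) that by blast
  qed (fact assms(2))
qed

theorem lemma2p1:
  fixes C :: "'e::banach set" and ell :: "'e \<Rightarrow> real" and K \<rho> \<theta> :: real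
    and \<M> :: "('e \<Rightarrow> 'e) set"
    and P :: "'w measure" and \<tau> \<tau>i :: "'w \<Rightarrow> 'w"
    and Lf :: "'w \<Rightarrow> 'e \<Rightarrow> 'e"
  assumes C_closed: "closed C" and C_convex: "convex C"
    and C_cone: "\<forall>t\<ge>0. \<forall>x\<in>C. t *\<^sub>R x \<in> C" and C_nonempty: "C \<noteq> {}"
    and C_pointed: "C \<inter> uminus ` C = {0}"
    and H1_lin: "bounded_linear ell" and H1_norm: "onorm ell = 1"
    and H1_K: "1 \<le> K" and H1: "\<forall>\<phi>\<in>C. ell \<phi> \<ge> norm \<phi> / K"
    and H2_rho: "0 < \<rho>" "\<rho> \<le> 1"
    and H2: "\<exists>\<phi>\<in>cone_rho C \<rho>. \<phi> \<noteq> 0"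
    and theta: "1 \<le> \<theta>"
    and M_lin: "\<forall>L\<in>\<M>. bounded_linear L"
    and H3: "\<forall>L\<in>\<M>. L ` (C - {0}) \<subseteq> cone_rho C \<rho> - {0}"
    and H4: "\<forall>L\<in>\<M>. 1 / \<theta> \<le> onorm L \<and> onorm L \<le> \<theta>"
    and prob: "prob_space P"
    and tau_pres: "meas_preserving P \<tau>" and taui_pres: "meas_preserving P \<tau>i"
    and tau_inv1: "\<forall>\<omega>\<in>space P. \<tau>i (\<tau> \<omega>) = \<omega>"
    and tau_inv2: "\<forall>\<omega>\<in>space P. \<tau> (\<tau>i \<omega>) = \<omega>"
    and tau_erg: "ergodic_map P \<tau>"
    and L_vals: "\<forall>\<omega>\<in>space P. Lf \<omega> \<in> \<M>"
    and L_welldef: "\<forall>\<phi>\<in>Linf_sections P. bochner_meas P (\<lambda>\<omega>. Lf (\<tau>i \<omega>) (\<phi> (\<tau>i \<omega>)))"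
  shows "\<exists>f\<in>Linf_sections P.
           (\<forall>\<omega>\<in>space P. f \<omega> \<in> cone_rho_l1 C \<rho> ell \<and> f \<omega> = proj_op Lf \<tau>i ell f \<omega>) \<and>
           (\<forall>g\<in>Linf_sections P.
              (\<forall>\<omega>\<in>space P. g \<omega> \<in> cone_rho_l1 C \<rho> ell \<and> g \<omega> = proj_op Lf \<tau>i ell g \<omega>)
              \<longrightarrow> (\<forall>\<omega>\<in>space P. g \<omega> = f \<omega>))"
proof -
  have "\<forall>\<omega>\<in>space P. \<tau>i \<omega> \<in> space P"
    using measurable_space taui_pres unfolding meas_preserving_def by metis
  moreover have "cone_functional C ell K \<rho>"
    by (rule cone_functional.intro)
      (use C_closed C_cone C_nonempty H1_lin H1_norm H1_K H1 H2_rho in simp_all)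
  ultimately interpret bochner_cone_cocycle C ell K \<rho> Lf \<tau>i P \<theta>
    using bochner_cone_cocycleI[of C ell K \<rho> \<theta> \<M>] theta M_lin H3 H4 L_vals L_welldef by simp
  obtain \<phi> where "\<phi> \<in> cone_rho C \<rho>" "\<phi> \<noteq> 0"
    using H2 by blast
  then have "normalized \<phi> \<in> slice"
    by (rule normalized_in_cone_rho_l1)
  then obtain f where f: "f \<in> Linf_sections P"
    and fixed: "\<And>\<omega>. \<omega> \<in> space P \<Longrightarrow> f \<omega> \<in> slice \<and> f \<omega> = proj f \<omega>"
    by (rule Linf_fixed_section_exists) blast
  moreover have "g \<omega> = f \<omega>"
    if "\<forall>\<omega>\<in>space P. g \<omega> \<in> slice \<and> g \<omega> = proj g \<omega>" and "\<omega> \<in> space P" for g \<omega>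
    using fixed_sections_unique[of g f \<omega>] that fixed by blast
  ultimately show ?thesis
    by blast
qed

end
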